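(* Let $G$ be the connected group with Lie algebra $\mathbf g=su_2(\mathbb C)\ltimes\mathbb R^3$ described below, $H$ the subgroup $\{(A,0)\}$ with Lie algebra $\mathbf h=\langle X,Y,Z\rangle$, and $\mathbf m_1=\langle V_1+Z,\ V_2+Y,\ V_3-X\rangle$. There is no global almost differentiable strongly left alternative left A-loop with $G$ as group topologically generated by its left translations, $H$ as stabilizer of the identity, and $T_1\sigma(G/H)=\mathbf m_1$.
   Context: $G$ consists of pairs $(A,X)$ with $A\in SU_2(\mathbb C)$ modulo $\pm 1$ and $X=\begin{pmatrix}k&li+n\\-li+n&-k\end{pmatrix}$, $k,l,n\in\mathbb R$, multiplied by $(A_1,X_1)(A_2,X_2)=(A_1A_2,A_2^{-1}X_1A_2+X_2)$. Basis of $\mathbf g$: $X=(\begin{pmatrix}i&0\\0&-i\end{pmatrix},0)$, $Y=(\begin{pmatrix}0&i\\i&0\end{pmatrix},0)$, $Z=(\begin{pmatrix}0&-1\\1&0\end{pmatrix},0)$, $V_1=(0,\begin{pmatrix}0&i\\-i&0\end{pmatrix})$, $V_2=(0,\begin{pmatrix}0&1\\1&0\end{pmatrix})$, $V_3=(0,\begin{pmatrix}-1&0\\0&1\end{pmatrix})$. A loop is a set with a binary operation and two-sided identity $e$ with uniquely solvable left and right division; a left A-loop has every $\lambda_{xy}^{-1}\lambda_x\lambda_y$ an automorphism ($\lambda_a(y)=a\cdot y$). For a connected loop, $G$ is the group topologically generated by left translations, $H$ the stabilizer of $e$, and left translations form the image of a sharply transitive global section $\sigma:G/H\to G$, $\sigma(H)=1$;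 almost differentiable means $G$ Lie and $\sigma$ differentiable; strongly left alternative means $\exp(T_1\sigma(G/H))\subseteq\sigma(G/H)$. *)

theory Defs
  imports "HOL-Analysis.Analysis"
begin

type_synonym cmat = "complex^2^2"
type_synonym pt = "cmat \<times> cmat"

definition mat2 :: "complex \<Rightarrow> complex \<Rightarrow> complex \<Rightarrow> complex \<Rightarrow> cmat" where
  "mat2 a b c d = (\<chi> i j. if i = 1 then (if j = 1 then a else b) else (if j = 1 then c else d))"

definition adjm :: "cmat \<Rightarrow> cmat" where
  "adjm A = (\<chi> i j. cnj (A $ j $ i))"

definition SU2 :: "cmat set" where
  "SU2 = {A. adjm A ** A = mat 1 \<and> det A = 1}"

definition hmat :: "real \<Rightarrow> real \<Rightarrow> real \<Rightarrow> cmat" where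
  "hmat k l n = mat2 (complex_of_real k) (complex_of_real l * \<i> + complex_of_real n)
                     (- complex_of_real l * \<i> + complex_of_real n) (- complex_of_real k)"

definition Vsp :: "cmat set" where
  "Vsp = {hmat k l n | k l n. True}"

text \<open>Representatives (A,X) and their multiplication (the covering group SU2 x R^3).\<close>
definition Gt :: "pt set" where
  "Gt = SU2 \<times> Vsp"

definition gmul :: "pt \<Rightarrow> pt \<Rightarrow> pt" where
  "gmul p q = (fst p ** fst q, matrix_inv (fst q) ** snd p ** fst q + snd q)"

text \<open>Elements of G: pairs (A,X) with A taken modulo +-1, i.e. classes {(A,X),(-A,X)}.\<close>
definition cls :: "pt \<Rightarrow> pt set" where
  "cls p = {(fst p, snd p), (- fst p, snd p)}"

definition G :: "pt set set" where
  "G = cls ` Gt"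

definition gmulc :: "pt set \<Rightarrow> pt set \<Rightarrow> pt set" where
  "gmulc g h = {gmul p q | p q. p \<in> g \<and> q \<in> h}"

definition ginv :: "pt set \<Rightarrow> pt set" where
  "ginv g = {(matrix_inv (fst p), - (fst p ** snd p ** matrix_inv (fst p))) | p. p \<in> g}"

definition gone :: "pt set" where
  "gone = cls (mat 1, 0)"

definition H :: "pt set set" where
  "H = {cls (A, 0) | A. A \<in> SU2}"

definition lcos :: "pt set \<Rightarrow> pt set set" where
  "lcos g = (\<lambda>h. gmulc g h) ` H"

definition GH :: "pt set set set" where
  "GH = lcos ` G"

definition act :: "pt set \<Rightarrow> pt set set \<Rightarrow> pt set set" where
  "act g C = (\<lambda>h. gmulc g h) ` C"

text \<open>Coordinate chart G/H -> R^3 (= Vsp): the coset of (A,X) is sent to A X A^-1.\<close>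
definition chart :: "pt set set \<Rightarrow> cmat" where
  "chart C = (THE P. \<forall>g\<in>C. \<forall>p\<in>g. P = fst p ** snd p ** matrix_inv (fst p))"

definition lmul :: "(pt set set \<Rightarrow> pt set) \<Rightarrow> pt set set \<Rightarrow> pt set set \<Rightarrow> pt set set" where
  "lmul \<sigma> x y = act (\<sigma> x) y"

text \<open>sigma: G/H -> G is a global section with sigma(H)=1 whose image is sharply transitive on G/H
  (equivalently, (G/H, lmul sigma) is a loop with identity H and left translations sigma(G/H)).\<close>
definition loop_section :: "(pt set set \<Rightarrow> pt set) \<Rightarrow> bool" where
  "loop_section \<sigma> \<longleftrightarrow>
     (\<forall>C\<in>GH. \<sigma> C \<in> G \<and> \<sigma> C \<in> C) \<and> \<sigma> (lcos gone) = gone \<and>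
     (\<forall>x\<in>GH. \<forall>y\<in>GH. \<exists>!z. z \<in> GH \<and> act (\<sigma> z) x = y)"

inductive_set gen :: "pt set set \<Rightarrow> pt set set" for S where
  gen_base: "g \<in> S \<Longrightarrow> g \<in> gen S"
| gen_one: "gone \<in> gen S"
| gen_mul: "g \<in> gen S \<Longrightarrow> h \<in> gen S \<Longrightarrow> gmulc g h \<in> gen S"
| gen_inv: "g \<in> gen S \<Longrightarrow> ginv g \<in> gen S"

text \<open>G is topologically generated by sigma(G/H): the closure of the generated subgroup is G
  (topology of G = quotient topology from Gt, a subspace of cmat x cmat).\<close>
definition top_generates :: "(pt set set \<Rightarrow> pt set) \<Rightarrow> bool" where
  "top_generates \<sigma> \<longleftrightarrow> closure (\<Union> (gen (\<sigma> ` GH))) = Gt"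

definition left_A_loop :: "(pt set set \<Rightarrow> pt set) \<Rightarrow> bool" where
  "left_A_loop \<sigma> \<longleftrightarrow>
    (\<forall>x\<in>GH. \<forall>y\<in>GH.
       let \<phi> = (\<lambda>z. inv_into GH (lmul \<sigma> (lmul \<sigma> x y)) (lmul \<sigma> x (lmul \<sigma> y z)))
       in bij_betw \<phi> GH GH \<and> (\<forall>a\<in>GH. \<forall>b\<in>GH. \<phi> (lmul \<sigma> a b) = lmul \<sigma> (\<phi> a) (\<phi> b)))"

text \<open>sigma is differentiable: in the chart of G/H, sigma admits near every point a differentiable
  local lift to representatives (SU2 -> SU2/+-1 is a local diffeomorphism).\<close>
definition sigma_differentiable :: "(pt set set \<Rightarrow> pt set) \<Rightarrow> bool" where
  "sigma_differentiable \<sigma> \<longleftrightarrow>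
    (\<forall>C0\<in>GH. \<exists>U \<tau>. open U \<and> chart C0 \<in> U \<and>
       (\<forall>Q\<in>U \<inter> Vsp. \<tau> differentiable (at Q within Vsp)) \<and>
       (\<forall>C\<in>GH. chart C \<in> U \<longrightarrow> \<tau> (chart C) \<in> \<sigma> C))"

text \<open>Tangent space at 1 of sigma(G/H), as a subspace of g = su2 x R^3 inside cmat x cmat.\<close>
definition tangent_one :: "(pt set set \<Rightarrow> pt set) \<Rightarrow> pt set" where
  "tangent_one \<sigma> = {v. \<exists>U \<tau> D. open U \<and> 0 \<in> U \<and>
       (\<forall>Q\<in>U \<inter> Vsp. \<tau> differentiable (at Q within Vsp)) \<and>
       (\<forall>C\<in>GH. chart C \<in> U \<longrightarrow> \<tau> (chart C) \<in> \<sigma> C) \<and>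
       \<tau> 0 = (mat 1, 0) \<and> (\<tau> has_derivative D) (at 0 within Vsp) \<and> v \<in> D ` Vsp}"

definition expG :: "pt \<Rightarrow> pt set set" where
  "expG v = {cls (\<gamma> 1) | \<gamma>. (\<forall>t. \<gamma> t \<in> Gt) \<and> (\<forall>s t. \<gamma> (s + t) = gmul (\<gamma> s) (\<gamma> t)) \<and>
                          (\<gamma> has_derivative (\<lambda>t. t *\<^sub>R v)) (at 0)}"

definition strongly_left_alternative :: "(pt set set \<Rightarrow> pt set) \<Rightarrow> bool" where
  "strongly_left_alternative \<sigma> \<longleftrightarrow> (\<forall>v\<in>tangent_one \<sigma>. expG v \<subseteq> \<sigma> ` GH)"

definition LX :: pt where "LX = (mat2 \<i> 0 0 (- \<i>), 0)"
definition LY :: pt where "LY = (mat2 0 \<i> \<i> 0, 0)"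
definition LZ :: pt where "LZ = (mat2 0 (-1) 1 0, 0)"
definition LV1 :: pt where "LV1 = (0, mat2 0 \<i> (- \<i>) 0)"
definition LV2 :: pt where "LV2 = (0, mat2 0 1 1 0)"
definition LV3 :: pt where "LV3 = (0, mat2 (-1) 0 0 1)"

definition m1 :: "pt set" where
  "m1 = span {LV1 + LZ, LV2 + LY, LV3 - LX}"

end

theory Submission
  imports Defs
begin

text \<open>Both $\frac{\pi}{2}(V_1+Z)$ and $\frac{\pi}{2}(V_2+Y)$ lie in $\mathbf m_1$, so strong left
  alternativity puts their exponentials $g_1 = (Z, \frac{\pi}{2}V_1)$ and $g_2 = (Y, \frac{\pi}{2}V_2)$
  into $\sigma(G/H)$. For $P = -\frac{\pi}{4}(V_1+V_2)$ conjugation by $X$ turns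
  $\frac{\pi}{2}V_1+P$ into $\frac{\pi}{2}V_2+P$, and $ZX = Y$, hence
  $g_2\,(1,P) = g_1\,(1,P)\,(X,0)$: the two distinct left translations $g_1, g_2$ map the coset
  $(1,P)H$ to the same coset, contradicting sharp transitivity of $\sigma(G/H)$ on $G/H$.\<close>

lemma matrix_add_rdistrib: "((A::'a::semiring_1^'n^'m) + B) ** C = A ** C + B ** C"
  by (simp add: matrix_matrix_mult_def vec_eq_iff sum.distrib distrib_right)

lemma matrix_neg_left [simp]: "(- (A::'a::ring_1^'n^'m)) ** B = - (A ** B)"
  by (simp add: matrix_matrix_mult_def vec_eq_iff sum_negf)

lemma matrix_neg_right [simp]: "(A::'a::ring_1^'n^'m) ** (- B) = - (A ** B)"
  by (simp add: matrix_matrix_mult_def vec_eq_iff sum_negf)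

lemma matrix_inv_right: "invertible A \<Longrightarrow> A ** matrix_inv A = mat 1"
  unfolding invertible_def matrix_inv_def by (rule someI2_ex) auto

lemma matrix_inv_unique:
  fixes A B :: "'a::field^'n^'n"
  assumes "A ** B = mat 1"
  shows "matrix_inv A = B"
proof -
  have "B ** A = mat 1" using assms matrix_left_right_inverse by blast
  then have "invertible A" using assms unfolding invertible_def by blast
  then have "matrix_inv A = (B ** A) ** matrix_inv A" using \<open>B ** A = mat 1\<close> by simp
  also have "\<dots> = B" using \<open>invertible A\<close> by (simp flip: matrix_mul_assoc add: matrix_inv_right)
  finally show ?thesis .
qed

lemma matrix_inv_mult:
  fixes B C :: "'a::field^'n^'n"
  assumes "invertible B" "invertible C"
  shows "matrix_inv (B ** C) = matrix_inv C ** matrix_inv B"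
proof (rule matrix_inv_unique)
  have "B ** C ** (matrix_inv C ** matrix_inv B) = B ** (C ** matrix_inv C) ** matrix_inv B"
    by (simp add: matrix_mul_assoc)
  also have "\<dots> = mat 1" using assms by (simp add: matrix_inv_right)
  finally show "B ** C ** (matrix_inv C ** matrix_inv B) = mat 1" .
qed

lemma matrix_inv_neg: "invertible (B::'a::field^'n^'n) \<Longrightarrow> matrix_inv (- B) = - matrix_inv B"
  by (rule matrix_inv_unique) (simp add: matrix_inv_right)

lemma invertible_neg: "invertible (B::'a::ring_1^'n^'n) \<Longrightarrow> invertible (- B)"
  unfolding invertible_def by (metis matrix_neg_left matrix_neg_right minus_minus)

text \<open>For \<open>M ** M = - mat 1\<close> this is the one-parameter group \<open>exp (t M)\<close>.\<close>

definition cis_matrix :: "'a::real_algebra_1^'n^'n \<Rightarrow> real \<Rightarrow> 'a^'n^'n" where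
  "cis_matrix M t = cos t *\<^sub>R mat 1 + sin t *\<^sub>R M"

lemma cis_matrix_add:
  assumes "M ** M = - mat 1"
  shows "cis_matrix M s ** cis_matrix M t = cis_matrix M (s + t)"
  using assms
  by (simp add: cis_matrix_def matrix_add_ldistrib matrix_add_rdistrib matrix_scalar_ac
      flip: scalar_matrix_assoc) (simp add: cos_add sin_add algebra_simps)

lemma cis_matrix_zero [simp]: "cis_matrix M 0 = mat 1"
  by (simp add: cis_matrix_def)

lemma cis_matrix_pi_half [simp]: "cis_matrix M (pi / 2) = M"
  by (simp add: cis_matrix_def)

lemma matrix_inv_cis_matrix:
  fixes M :: "'a::{field,real_algebra_1}^'n^'n"
  assumes "M ** M = - mat 1"
  shows "matrix_inv (cis_matrix M t) = cis_matrix M (- t)"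
  by (rule matrix_inv_unique) (simp add: cis_matrix_add[OF assms])

lemma cis_matrix_commute:
  assumes "M ** V = V ** M"
  shows "cis_matrix M t ** V = V ** cis_matrix M t"
  using assms
  by (simp add: cis_matrix_def matrix_add_ldistrib matrix_add_rdistrib matrix_scalar_ac
      flip: scalar_matrix_assoc)

lemma cis_matrix_has_vector_derivative:
  fixes M :: "'a::real_normed_algebra_1^'n^'n"
  shows "((\<lambda>t. cis_matrix M (a * t)) has_vector_derivative a *\<^sub>R M) (at 0)"
proof -
  have "((\<lambda>t. cos (a * t) *\<^sub>R mat 1 + sin (a * t) *\<^sub>R M) has_vector_derivative
          (- (a * sin (a * 0))) *\<^sub>R mat 1 + (a * cos (a * 0)) *\<^sub>R M) (at 0)"
    by (auto intro!: derivative_eq_intros)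
  then show ?thesis by (simp add: cis_matrix_def)
qed

lemma mat2_nth [simp]:
  "mat2 a b c d $ 1 $ 1 = a" "mat2 a b c d $ 1 $ 2 = b"
  "mat2 a b c d $ 2 $ 1 = c" "mat2 a b c d $ 2 $ 2 = d"
  by (simp_all add: mat2_def)

lemma cmat_eq_iff: "(A::cmat) = B \<longleftrightarrow> A$1$1 = B$1$1 \<and> A$1$2 = B$1$2 \<and> A$2$1 = B$2$1 \<and> A$2$2 = B$2$2"
  by (auto simp: vec_eq_iff forall_2)

lemma mat2_eq_iff [simp]: "mat2 a b c d = mat2 a' b' c' d' \<longleftrightarrow> a = a' \<and> b = b' \<and> c = c' \<and> d = d'"
  by (simp add: cmat_eq_iff)

lemma mat2_cases: obtains a b c d where "(A::cmat) = mat2 a b c d"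
  by (metis (no_types) cmat_eq_iff mat2_nth)

lemma mat2_mult [simp]:
  "mat2 a b c d ** mat2 a' b' c' d' = mat2 (a*a'+b*c') (a*b'+b*d') (c*a'+d*c') (c*b'+d*d')"
  by (simp add: cmat_eq_iff matrix_matrix_mult_def sum_2)

lemma mat2_add [simp]: "mat2 a b c d + mat2 a' b' c' d' = mat2 (a+a') (b+b') (c+c') (d+d')"
  by (simp add: cmat_eq_iff)

lemma mat2_uminus [simp]: "- mat2 a b c d = mat2 (-a) (-b) (-c) (-d)"
  by (simp add: cmat_eq_iff)

lemma mat2_scaleR [simp]: "r *\<^sub>R mat2 a b c d = mat2 (r *\<^sub>R a) (r *\<^sub>R b) (r *\<^sub>R c) (r *\<^sub>R d)"
  by (simp add: cmat_eq_iff)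

lemma mat2_one: "(mat 1 :: cmat) = mat2 1 0 0 1"
  by (simp add: cmat_eq_iff mat_def)

lemma mat2_zero: "(0 :: cmat) = mat2 0 0 0 0"
  by (simp add: cmat_eq_iff)

lemma det_mat2 [simp]: "det (mat2 a b c d) = a*d - b*c"
  by (simp add: det_2)

lemma adjm_mat2 [simp]: "adjm (mat2 a b c d) = mat2 (cnj a) (cnj c) (cnj b) (cnj d)"
  by (simp add: cmat_eq_iff adjm_def)

lemma adjm_mult: "adjm ((A::cmat) ** B) = adjm B ** adjm A"
  by (cases A rule: mat2_cases, cases B rule: mat2_cases) (simp add: mult.commute)

lemma adjm_adjm [simp]: "adjm (adjm A) = A"
  by (simp add: cmat_eq_iff adjm_def)

lemma det_adjm: "det (adjm (A::cmat)) = cnj (det A)"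
  by (cases A rule: mat2_cases) (simp add: mult.commute)

lemma SU2_right_inverse: "A \<in> SU2 \<Longrightarrow> A ** adjm A = mat 1"
  unfolding SU2_def using matrix_left_right_inverse by blast

lemma matrix_inv_SU2: "A \<in> SU2 \<Longrightarrow> matrix_inv A = adjm A"
  by (rule matrix_inv_unique) (rule SU2_right_inverse)

lemma SU2_invertible: "A \<in> SU2 \<Longrightarrow> invertible A"
  unfolding invertible_def using SU2_right_inverse by (auto simp: SU2_def)

lemma SU2_adjm: "A \<in> SU2 \<Longrightarrow> adjm A \<in> SU2"
  using SU2_right_inverse by (simp add: SU2_def det_adjm)

lemma SU2_mult: "A \<in> SU2 \<Longrightarrow> B \<in> SU2 \<Longrightarrow> A ** B \<in> SU2"
proof -
  assume A: "A \<in> SU2" and B: "B \<in> SU2"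
  have "adjm (A ** B) ** (A ** B) = adjm B ** (adjm A ** A) ** B"
    by (simp add: adjm_mult matrix_mul_assoc)
  also have "\<dots> = mat 1" using A B by (simp add: SU2_def)
  finally show ?thesis using A B by (simp add: SU2_def det_mul)
qed

lemma SU2_one: "mat 1 \<in> SU2"
  by (simp add: SU2_def mat2_one)

lemma cis_matrix_SU2:
  assumes "M \<in> SU2" "M ** M = - mat 1"
  shows "cis_matrix M t \<in> SU2"
proof -
  obtain a b c d where M: "M = mat2 a b c d" by (rule mat2_cases)
  have "adjm M = - M"
    proof -
    have "M ** (- M) = mat 1" using assms(2) by simp
    then show ?thesis using assms(1) by (simp add: matrix_inv_unique flip: matrix_inv_SU2)
  qed
  then have "adjm (cis_matrix M t) = cis_matrix M (- t)"
    by (simp add: M cis_matrix_def mat2_one scaleR_conv_of_real[where 'a=complex])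
  then have unitary: "adjm (cis_matrix M t) ** cis_matrix M t = mat 1"
    by (simp add: cis_matrix_add[OF assms(2)])
  have det: "a * d - b * c = 1" using assms(1) by (simp add: M SU2_def)
  have sq: "a * a + b * c = -1" "d * d + b * c = -1" "b * (a + d) = 0"
    using assms(2) by (simp_all add: M mat2_one cmat_eq_iff algebra_simps)
  have "a * (a + d) = (a * a + b * c) + (a * d - b * c)"
    "d * (a + d) = (d * d + b * c) + (a * d - b * c)"
    by (simp_all add: algebra_simps)
  then have "a * (a + d) = 0" "d * (a + d) = 0" using det sq by simp_all
  then have trace: "a + d = 0" by auto
  have "det (cis_matrix M t) =
      of_real (cos t) ^ 2 + of_real (sin t) ^ 2 * (a * d - b * c) + of_real (cos t * sin t) * (a + d)"
    by (simp add: M cis_matrix_def mat2_one scaleR_conv_of_real[where 'a=complex] power2_eq_square algebra_simps)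
  also have "\<dots> = 1"
    using trace det by (simp flip: of_real_power of_real_add)
  finally show ?thesis using unitary by (simp add: SU2_def)
qed

lemma gmul_assoc:
  assumes "invertible (fst q)" "invertible (fst r)"
  shows "gmul (gmul p q) r = gmul p (gmul q r)"
  using assms by (simp add: gmul_def matrix_inv_mult matrix_mul_assoc matrix_add_ldistrib matrix_add_rdistrib)

lemma gmulc_assoc:
  assumes "\<forall>q\<in>h. invertible (fst q)" "\<forall>r\<in>k. invertible (fst r)"
  shows "gmulc (gmulc g h) k = gmulc g (gmulc h k)"
proof -
  have assoc: "gmul (gmul p q) r = gmul p (gmul q r)" if "q \<in> h" "r \<in> k" for p q r
    using assms that by (simp add: gmul_assoc)
  have "gmulc (gmulc g h) k = {gmul (gmul p q) r | p q r. p \<in> g \<and> q \<in> h \<and> r \<in> k}"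
    unfolding gmulc_def by blast
  also have "\<dots> = {gmul p (gmul q r) | p q r. p \<in> g \<and> q \<in> h \<and> r \<in> k}"
    using assoc by (intro Collect_cong) metis
  also have "\<dots> = gmulc g (gmulc h k)"
    unfolding gmulc_def by blast
  finally show ?thesis .
qed

lemma gmulc_cls:
  assumes "invertible B"
  shows "gmulc (cls (A, X)) (cls (B, Y)) = cls (A ** B, matrix_inv B ** X ** B + Y)"
proof -
  have "gmul p q \<in> cls (A ** B, matrix_inv B ** X ** B + Y)"
    if "p \<in> cls (A, X)" "q \<in> cls (B, Y)" for p q
    using that assms by (auto simp: cls_def gmul_def matrix_inv_neg)
  then have "gmulc (cls (A, X)) (cls (B, Y)) \<subseteq> cls (A ** B, matrix_inv B ** X ** B + Y)"
    unfolding gmulc_def by blast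
  moreover have "cls (A ** B, matrix_inv B ** X ** B + Y) = {gmul (A, X) (B, Y), gmul (- A, X) (B, Y)}"
    by (simp add: cls_def gmul_def)
  moreover have "(A, X) \<in> cls (A, X)" "(- A, X) \<in> cls (A, X)" "(B, Y) \<in> cls (B, Y)"
    by (simp_all add: cls_def)
  ultimately show ?thesis unfolding gmulc_def by blast
qed

lemma cls_eqD: "cls (A, X) = cls (B, Y) \<Longrightarrow> A = B \<or> A = - B"
  by (auto simp: cls_def doubleton_eq_iff)

lemma hmat_in_Vsp [simp]: "hmat k l n \<in> Vsp"
  by (auto simp: Vsp_def)

lemma hmat_zero: "hmat 0 0 0 = 0"
  by (simp add: hmat_def mat2_zero)

lemma hmat_add: "hmat k l n + hmat k' l' n' = hmat (k + k') (l + l') (n + n')"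
  by (simp add: hmat_def algebra_simps)

lemma hmat_scaleR: "r *\<^sub>R hmat k l n = hmat (r * k) (r * l) (r * n)"
  by (simp add: hmat_def scaleR_conv_of_real[where 'a=complex] algebra_simps)

lemma Vsp_scaleR: "X \<in> Vsp \<Longrightarrow> r *\<^sub>R X \<in> Vsp"
  unfolding Vsp_def using hmat_scaleR by blast

lemma cls_in_G: "A \<in> SU2 \<Longrightarrow> X \<in> Vsp \<Longrightarrow> cls (A, X) \<in> G"
  by (auto simp: G_def Gt_def)

lemma G_invertible: "g \<in> G \<Longrightarrow> p \<in> g \<Longrightarrow> invertible (fst p)"
  by (auto simp: G_def Gt_def cls_def SU2_invertible invertible_neg)

lemma H_subset_G: "H \<subseteq> G"
  using cls_in_G hmat_in_Vsp[of 0 0 0] by (auto simp: H_def hmat_zero)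

lemma gmulc_assoc_G: "h \<in> G \<Longrightarrow> k \<in> G \<Longrightarrow> gmulc (gmulc g h) k = gmulc g (gmulc h k)"
  by (simp add: gmulc_assoc G_invertible)

lemma act_lcos:
  assumes "k \<in> G"
  shows "act g (lcos k) = lcos (gmulc g k)"
proof -
  have "act g (lcos k) = (\<lambda>h. gmulc g (gmulc k h)) ` H"
    unfolding act_def lcos_def by (simp add: image_image)
  also have "\<dots> = (\<lambda>h. gmulc (gmulc g k) h) ` H"
    using assms H_subset_G by (intro image_cong refl) (simp add: gmulc_assoc_G subset_iff)
  finally show ?thesis unfolding lcos_def .
qed

lemma H_translate:
  assumes "h \<in> H"
  shows "(\<lambda>h'. gmulc h h') ` H = H"
proof -
  obtain B where B: "B \<in> SU2" and h: "h = cls (B, 0)" using assms by (auto simp: H_def)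
  have mult: "gmulc h (cls (C, 0)) = cls (B ** C, 0)" if "C \<in> SU2" for C
    using that by (simp add: h gmulc_cls SU2_invertible)
  have "cls (C, 0) \<in> (\<lambda>h'. gmulc h h') ` H" if "C \<in> SU2" for C
  proof
    have "cls (C, 0) = cls (B ** (adjm B ** C), 0)"
      using B by (simp add: matrix_mul_assoc SU2_right_inverse)
    also have "\<dots> = gmulc h (cls (adjm B ** C, 0))"
      by (rule mult[symmetric]) (simp add: B that SU2_mult SU2_adjm)
    finally show "cls (C, 0) = gmulc h (cls (adjm B ** C, 0))" .
    show "cls (adjm B ** C, 0) \<in> H"
      using B that by (auto simp: H_def SU2_mult SU2_adjm)
  qed
  then show ?thesis using B by (auto simp: H_def mult SU2_mult)
qed

lemma lcos_mult_H:
  assumes "h \<in> H"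
  shows "lcos (gmulc g h) = lcos g"
proof -
  have "lcos (gmulc g h) = (\<lambda>h'. gmulc g (gmulc h h')) ` H"
    unfolding lcos_def using assms H_subset_G
    by (intro image_cong refl) (simp add: gmulc_assoc_G subset_iff)
  also have "\<dots> = (\<lambda>h'. gmulc g h') ` ((\<lambda>h'. gmulc h h') ` H)"
    by (simp add: image_image)
  also have "\<dots> = lcos g" using H_translate[OF assms] by (simp add: lcos_def)
  finally show ?thesis .
qed

lemma act_lcos_translation:
  assumes "P \<in> Vsp"
  shows "act (cls (A, W)) (lcos (cls (mat 1, P))) = lcos (cls (A, W + P))"
proof -
  have "matrix_inv (mat 1 :: cmat) = mat 1" by (rule matrix_inv_unique) simp
  then show ?thesis
    using assms SU2_one by (simp add: act_lcos cls_in_G gmulc_cls SU2_invertible)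
qed

lemma loop_section_act_inj:
  assumes "loop_section \<sigma>" "x \<in> GH" "C1 \<in> GH" "C2 \<in> GH"
    and "act (\<sigma> C1) x \<in> GH" "act (\<sigma> C1) x = act (\<sigma> C2) x"
  shows "C1 = C2"
proof -
  have "\<forall>x\<in>GH. \<forall>y\<in>GH. \<exists>!z. z \<in> GH \<and> act (\<sigma> z) x = y"
    using assms(1) unfolding loop_section_def by (elim conjE)
  then have "\<exists>!z. z \<in> GH \<and> act (\<sigma> z) x = act (\<sigma> C1) x"
    using assms(2,5) by simp
  then show ?thesis using assms(3,4,6) by (elim ex1E) blast
qed

lemma cis_matrix_in_expG:
  assumes "M \<in> SU2" "M ** M = - mat 1" "M ** V = V ** M" "V \<in> Vsp"
  shows "cls (cis_matrix M a, a *\<^sub>R V) \<in> expG (a *\<^sub>R (M, V))"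
proof -
  define \<gamma> where "\<gamma> = (\<lambda>t. (cis_matrix M (a * t), (a * t) *\<^sub>R V))"
  have "\<gamma> t \<in> Gt" for t
    using assms by (simp add: \<gamma>_def Gt_def cis_matrix_SU2 Vsp_scaleR)
  moreover have "\<gamma> (s + t) = gmul (\<gamma> s) (\<gamma> t)" for s t
  proof -
    have "cis_matrix M (- (a * t)) ** V ** cis_matrix M (a * t)
        = cis_matrix M (- (a * t)) ** (cis_matrix M (a * t) ** V)"
      by (metis matrix_mul_assoc cis_matrix_commute[OF assms(3)])
    also have "\<dots> = V"
      by (simp add: matrix_mul_assoc cis_matrix_add[OF assms(2)])
    finally show ?thesis
      by (simp add: \<gamma>_def gmul_def cis_matrix_add[OF assms(2)] matrix_inv_cis_matrix[OF assms(2)]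
          matrix_scalar_ac distrib_left scaleR_add_left flip: scalar_matrix_assoc)
  qed
  moreover have "(\<gamma> has_vector_derivative a *\<^sub>R (M, V)) (at 0)"
  proof -
    have "((\<lambda>t. (a * t) *\<^sub>R V) has_vector_derivative a *\<^sub>R V) (at 0)"
      using bounded_linear_imp_has_derivative[OF bounded_linear_scaleR_left, of "a *\<^sub>R V"]
      by (simp add: has_vector_derivative_def mult.commute)
    from has_vector_derivative_Pair[OF cis_matrix_has_vector_derivative[of M a] this]
    show ?thesis by (simp add: \<gamma>_def)
  qed
  ultimately have "cls (\<gamma> 1) \<in> expG (a *\<^sub>R (M, V))"
    unfolding expG_def has_vector_derivative_def by blast
  then show ?thesis by (simp add: \<gamma>_def)
qed

lemma SU2_fst_LX_LY_LZ: "fst LX \<in> SU2" "fst LY \<in> SU2" "fst LZ \<in> SU2"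
  by (simp_all add: LX_def LY_def LZ_def SU2_def mat2_one)

lemma exp_LV1_LZ: "cls (fst LZ, hmat 0 (pi/2) 0) \<in> expG ((pi/2) *\<^sub>R (LV1 + LZ))"
proof -
  have "LV1 + LZ = (fst LZ, hmat 0 1 0)"
    by (simp add: LV1_def LZ_def hmat_def mat2_zero)
  moreover have "fst LZ ** fst LZ = - mat 1" "fst LZ ** hmat 0 1 0 = hmat 0 1 0 ** fst LZ"
    by (simp_all add: LZ_def hmat_def mat2_one)
  ultimately show ?thesis
    using cis_matrix_in_expG[of "fst LZ" "hmat 0 1 0" "pi/2"] by (simp add: SU2_fst_LX_LY_LZ hmat_scaleR)
qed

lemma exp_LV2_LY: "cls (fst LY, hmat 0 0 (pi/2)) \<in> expG ((pi/2) *\<^sub>R (LV2 + LY))"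
proof -
  have "LV2 + LY = (fst LY, hmat 0 0 1)"
    by (simp add: LV2_def LY_def hmat_def mat2_zero)
  moreover have "fst LY ** fst LY = - mat 1" "fst LY ** hmat 0 0 1 = hmat 0 0 1 ** fst LY"
    by (simp_all add: LY_def hmat_def mat2_one)
  ultimately show ?thesis
    using cis_matrix_in_expG[of "fst LY" "hmat 0 0 1" "pi/2"] by (simp add: SU2_fst_LX_LY_LZ hmat_scaleR)
qed

lemma LX_conj_hmat: "matrix_inv (fst LX) ** hmat 0 l n ** fst LX = hmat 0 (- l) (- n)"
proof -
  have "matrix_inv (fst LX) = mat2 (- \<i>) 0 0 \<i>"
    by (rule matrix_inv_unique) (simp add: LX_def mat2_one)
  then show ?thesis by (simp add: LX_def hmat_def algebra_simps)
qed

lemma exp_LV2_LY_act_eq_exp_LV1_LZ: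
  defines "x \<equiv> lcos (cls (mat 1, hmat 0 (- pi/4) (- pi/4)))"
  shows "act (cls (fst LY, hmat 0 0 (pi/2))) x = act (cls (fst LZ, hmat 0 (pi/2) 0)) x"
proof -
  have "cls (fst LY, hmat 0 (- pi/4) (pi/4)) = gmulc (cls (fst LZ, hmat 0 (pi/4) (- pi/4))) (cls (fst LX, 0))"
    by (simp add: gmulc_cls SU2_invertible SU2_fst_LX_LY_LZ LX_conj_hmat) (simp add: LX_def LY_def LZ_def)
  moreover have "cls (fst LX, 0) \<in> H"
    using SU2_fst_LX_LY_LZ by (auto simp: H_def)
  ultimately show ?thesis
    by (simp add: x_def act_lcos_translation hmat_add lcos_mult_H)
qed

theorem proposition23:
  shows "\<not> (\<exists>\<sigma>. loop_section \<sigma> \<and> top_generates \<sigma> \<and> left_A_loop \<sigma> \<and>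
              sigma_differentiable \<sigma> \<and> strongly_left_alternative \<sigma> \<and> tangent_one \<sigma> = m1)"
proof
  assume "\<exists>\<sigma>. loop_section \<sigma> \<and> top_generates \<sigma> \<and> left_A_loop \<sigma> \<and>
              sigma_differentiable \<sigma> \<and> strongly_left_alternative \<sigma> \<and> tangent_one \<sigma> = m1"
  then obtain \<sigma> where loop: "loop_section \<sigma>" and alt: "strongly_left_alternative \<sigma>"
    and tangent: "tangent_one \<sigma> = m1" by blast
  have "(pi/2) *\<^sub>R (LV1 + LZ) \<in> tangent_one \<sigma>" "(pi/2) *\<^sub>R (LV2 + LY) \<in> tangent_one \<sigma>"
    unfolding tangent m1_def by (simp_all add: span_mul span_base)
  then have "cls (fst LZ, hmat 0 (pi/2) 0) \<in> \<sigma> ` GH" "cls (fst LY, hmat 0 0 (pi/2)) \<in> \<sigma> ` GH"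
    using alt exp_LV1_LZ exp_LV2_LY unfolding strongly_left_alternative_def by blast+
  then obtain C1 C2 where C: "C1 \<in> GH" "C2 \<in> GH"
    and \<sigma>C: "\<sigma> C1 = cls (fst LZ, hmat 0 (pi/2) 0)" "\<sigma> C2 = cls (fst LY, hmat 0 0 (pi/2))"
    by (elim imageE) simp
  define x where "x = lcos (cls (mat 1, hmat 0 (- pi/4) (- pi/4)))"
  have "x \<in> GH" "act (\<sigma> C1) x \<in> GH"
    unfolding x_def \<sigma>C GH_def using SU2_one SU2_fst_LX_LY_LZ
    by (auto simp: act_lcos_translation hmat_add intro!: cls_in_G)
  moreover have "act (\<sigma> C1) x = act (\<sigma> C2) x"
    unfolding x_def \<sigma>C by (rule exp_LV2_LY_act_eq_exp_LV1_LZ[symmetric])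
  ultimately have "C1 = C2" by (intro loop_section_act_inj[OF loop _ C])
  then have "fst LZ = fst LY \<or> fst LZ = - fst LY" using \<sigma>C cls_eqD by metis
  then show False by (simp add: LZ_def LY_def)
qed

end
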